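(* Let $G$ be a finite connected weighted graph with $N$ vertices and let $\lambda_{N-1}$ be the largest eigenvalue of its weighted Laplacian $L_w$. For any $S_0\subset V(G)$ with $S_0\cup b(S_0)=V(G)$, \[ \mathcal{N}\left[0,\ K_0(S_0)/2\right)\le|S_0|\quad\text{and}\quad\mathcal{N}\left[K_0(S_0)/2,\ \lambda_{N-1}\right]\ge N-|S_0|. \]
   Context: $G$ has vertex set $V(G)$ and symmetric weights $w\ge0$ with $w(u,u)=0$; $u\sim v$ iff $w(u,v)>0$; connected refers to this edge relation. $(L_wf)(v)=\sum_u(f(v)-f(u))w(v,u)$ on $\ell^2(G)$ (vertex weight $\nu\equiv1$). $\mathcal{N}I$ is the number of eigenvalues of $L_w$ in the interval $I$ counted with multiplicity. For $S\subset V(G)$: $cl(S)=S\cup\{v:\exists u\in S,\ u\sim v\}$ and $b(S)=cl(S)\setminus S$. $K_0(S_0)=\inf_{v\in b(S_0)}\sum_{u\in S_0}w(u,v)$. *)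

theory Defs
  imports "Jordan_Normal_Form.Char_Poly"
begin

definition adj :: "(nat \<Rightarrow> nat \<Rightarrow> real) \<Rightarrow> nat \<Rightarrow> nat \<Rightarrow> bool" where
  "adj w u v \<longleftrightarrow> w u v > 0"

definition weighted_graph :: "nat \<Rightarrow> (nat \<Rightarrow> nat \<Rightarrow> real) \<Rightarrow> bool" where
  "weighted_graph N w \<longleftrightarrow>
     (\<forall>u<N. \<forall>v<N. w u v \<ge> 0 \<and> w u v = w v u) \<and> (\<forall>u<N. w u u = 0)"

definition graph_connected :: "nat \<Rightarrow> (nat \<Rightarrow> nat \<Rightarrow> real) \<Rightarrow> bool" where
  "graph_connected N w \<longleftrightarrow>
     (\<forall>u<N. \<forall>v<N. (\<lambda>x y. x < N \<and> y < N \<and> adj w x y)\<^sup>*\<^sup>* u v)"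

text \<open>Weighted Laplacian (L_w f)(v) = sum_u (f v - f u) w(v,u), as an N x N matrix.\<close>
definition laplacian :: "nat \<Rightarrow> (nat \<Rightarrow> nat \<Rightarrow> real) \<Rightarrow> real mat" where
  "laplacian N w = mat N N (\<lambda>(i, j).
      (if i = j then (\<Sum>u<N. w i u) else 0) - w i j)"

definition eig_count :: "real mat \<Rightarrow> real set \<Rightarrow> nat" where
  "eig_count A I = (\<Sum>a \<in> {a. eigenvalue A a \<and> a \<in> I}. order a (char_poly A))"

definition largest_eigenvalue :: "real mat \<Rightarrow> real" where
  "largest_eigenvalue A = Max {a. eigenvalue A a}"

definition cl :: "nat \<Rightarrow> (nat \<Rightarrow> nat \<Rightarrow> real) \<Rightarrow> nat set \<Rightarrow> nat set" where
  "cl N w S = S \<union> {v. v < N \<and> (\<exists>u\<in>S. adj w u v)}"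

definition bdry :: "nat \<Rightarrow> (nat \<Rightarrow> nat \<Rightarrow> real) \<Rightarrow> nat set \<Rightarrow> nat set" where
  "bdry N w S = cl N w S - S"

definition K0 :: "nat \<Rightarrow> (nat \<Rightarrow> nat \<Rightarrow> real) \<Rightarrow> nat set \<Rightarrow> real" where
  "K0 N w S0 = (INF v \<in> bdry N w S0. \<Sum>u\<in>S0. w u v)"

end

theory Submission
  imports Defs
begin

text \<open>The Laplacian is symmetric, so it has an orthonormal eigenbasis, and its quadratic form is
  \<open>\<langle>f, L f\<rangle> = \<onehalf> \<Sum>\<^sub>u\<^sub>,\<^sub>v w(u,v) (f u - f v)\<^sup>2\<close>. If \<open>f\<close> vanishes on \<open>S\<^sub>0\<close>, every vertex \<open>v\<close>
  outside \<open>S\<^sub>0\<close> lies in \<open>b(S\<^sub>0)\<close> and its edges into \<open>S\<^sub>0\<close> contribute at least \<open>K\<^sub>0 f(v)\<^sup>2\<close>, so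
  \<open>\<langle>f, L f\<rangle> \<ge> (K\<^sub>0/2) \<parallel>f\<parallel>\<^sup>2\<close>. With more than \<open>|S\<^sub>0|\<close> eigenvalues below \<open>K\<^sub>0/2\<close>, some nonzero
  combination of their eigenvectors would vanish on \<open>S\<^sub>0\<close> and have a smaller Rayleigh quotient.
  The second inequality counts the remaining eigenvalues.\<close>

section \<open>Orthonormal eigenbases of real symmetric matrices\<close>

definition orthonormal_eigenbasis ::
    "real mat \<Rightarrow> nat \<Rightarrow> (nat \<Rightarrow> real) \<Rightarrow> (nat \<Rightarrow> real vec) \<Rightarrow> bool" where
  "orthonormal_eigenbasis A n d p \<longleftrightarrow>
     (\<forall>i<n. p i \<in> carrier_vec n \<and> A *\<^sub>v p i = d i \<cdot>\<^sub>v p i) \<and>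
     (\<forall>i<n. \<forall>j<n. p i \<bullet> p j = (if i = j then 1 else 0))"

lemma symmetric_matD:
  assumes "A \<in> carrier_mat n n" "A\<^sup>T = A" "i < n" "j < n"
  shows "A $$ (i, j) = A $$ (j, i)"
  using assms by (metis carrier_matD index_transpose_mat(1))

text \<open>If \<open>A x = z x\<close> with \<open>x \<noteq> 0\<close> complex, then \<open>x\<^sup>* A x = z \<parallel>x\<parallel>\<^sup>2\<close> is its own conjugate.\<close>

lemma eigenvalue_real_symmetric_mat_is_real:
  fixes A :: "real mat"
  assumes A: "A \<in> carrier_mat n n" and sym: "A\<^sup>T = A"
    and z: "eigenvalue (map_mat complex_of_real A) z"
  shows "Im z = 0"
proof -
  let ?C = "map_mat complex_of_real A"
  have C: "?C \<in> carrier_mat n n" using A by auto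
  obtain x where x: "x \<in> carrier_vec n" "x \<noteq> 0\<^sub>v n" "?C *\<^sub>v x = z \<cdot>\<^sub>v x"
    using z C unfolding eigenvalue_def eigenvector_def by auto
  have row: "(\<Sum>j<n. of_real (A $$ (i, j)) * x $ j) = z * x $ i" if i: "i < n" for i
  proof -
    have "(?C *\<^sub>v x) $ i = z * x $ i" using x(3) i x(1) by auto
    moreover have "(?C *\<^sub>v x) $ i = (\<Sum>j<n. of_real (A $$ (i, j)) * x $ j)"
      using i A x(1) by (auto simp: scalar_prod_def row_def lessThan_atLeast0)
    ultimately show ?thesis by simp
  qed
  define S where "S = (\<Sum>i<n. cnj (x $ i) * (\<Sum>j<n. of_real (A $$ (i, j)) * x $ j))"
  have S_z: "S = z * of_real (\<Sum>i<n. (cmod (x $ i))\<^sup>2)"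
  proof -
    have "S = z * (\<Sum>i<n. cnj (x $ i) * x $ i)"
      unfolding S_def using row by (simp add: sum_distrib_left mult_ac)
    also have "(\<Sum>i<n. cnj (x $ i) * x $ i) = of_real (\<Sum>i<n. (cmod (x $ i))\<^sup>2)"
      unfolding of_real_sum
      by (intro sum.cong refl) (metis complex_norm_square mult.commute of_real_power)
    finally show ?thesis .
  qed
  have "cnj S = (\<Sum>i<n. \<Sum>j<n. x $ i * (of_real (A $$ (i, j)) * cnj (x $ j)))"
    unfolding S_def by (simp add: sum_distrib_left)
  also have "\<dots> = (\<Sum>j<n. \<Sum>i<n. x $ i * (of_real (A $$ (i, j)) * cnj (x $ j)))"
    by (rule sum.swap)
  also have "\<dots> = S" unfolding S_def sum_distrib_left
    by (intro sum.cong refl) (auto simp: symmetric_matD[OF A sym] mult_ac)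
  finally have "Im S = 0"
    by (metis cnj.sel(2) complex_cnj_cancel_iff equation_minus_iff neg_equal_zero)
  moreover obtain i where i: "i < n" "x $ i \<noteq> 0"
    using x(1,2) by (metis eq_vecI carrier_vecD index_zero_vec)
  then have "(\<Sum>i<n. (cmod (x $ i))\<^sup>2) > 0"
    by (intro sum_pos2[of _ i]) auto
  ultimately show ?thesis using S_z by simp
qed

lemma real_symmetric_mat_has_eigenvector:
  fixes A :: "real mat"
  assumes A: "A \<in> carrier_mat n n" and sym: "A\<^sup>T = A" and n: "0 < n"
  shows "\<exists>l v. v \<in> carrier_vec n \<and> v \<noteq> 0\<^sub>v n \<and> A *\<^sub>v v = l \<cdot>\<^sub>v v"
proof -
  let ?C = "map_mat complex_of_real A"
  have C: "?C \<in> carrier_mat n n" using A by auto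
  obtain as where cp: "char_poly ?C = (\<Prod>a\<leftarrow>as. [:-a, 1:])" and len: "length as = n"
    using char_poly_factorized[OF C] by blast
  obtain z zs where as: "as = z # zs" using len n by (cases as) auto
  have root: "poly (char_poly ?C) z = 0" unfolding cp as by simp
  then have "Im z = 0"
    using eigenvalue_real_symmetric_mat_is_real[OF A sym] eigenvalue_root_char_poly[OF C] by blast
  then have "z = of_real (Re z)" by (simp add: complex_eqI)
  then have "of_real (poly (char_poly A) (Re z)) = poly (char_poly ?C) z"
    using of_real_hom.char_poly_hom[OF A] by (metis of_real_hom.poly_map_poly)
  then have "eigenvalue A (Re z)"
    using root eigenvalue_root_char_poly[OF A] by simp
  then show ?thesis unfolding eigenvalue_def eigenvector_def using A by auto
qed

lemma unit_multiple_with_nonpos_head: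
  fixes v :: "real vec"
  assumes v: "v \<in> carrier_vec n" "v \<noteq> 0\<^sub>v n"
  shows "\<exists>k. (k \<cdot>\<^sub>v v) \<bullet> (k \<cdot>\<^sub>v v) = 1 \<and> (k \<cdot>\<^sub>v v) $ 0 \<le> 0"
proof -
  obtain i where i: "i < n" "v $ i \<noteq> 0" using v by (metis eq_vecI carrier_vecD index_zero_vec)
  have "v \<bullet> v = (\<Sum>j<n. (v $ j)\<^sup>2)"
    using v(1) by (simp add: scalar_prod_def lessThan_atLeast0 power2_eq_square)
  also have "\<dots> > 0" by (rule sum_pos2[of _ i]) (use i in auto)
  finally have vv: "v \<bullet> v > 0" .
  define k where "k = (if v $ 0 \<le> 0 then 1 else -1) / sqrt (v \<bullet> v)"
  have "k * k * (v \<bullet> v) = 1" unfolding k_def using vv by (auto simp: field_simps)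
  then have "(k \<cdot>\<^sub>v v) \<bullet> (k \<cdot>\<^sub>v v) = 1"
    using v(1) by (simp add: smult_scalar_prod_distrib scalar_prod_smult_distrib mult_ac)
  moreover have "(k \<cdot>\<^sub>v v) $ 0 \<le> 0" unfolding k_def using v(1) vv i
    by (auto simp: divide_nonpos_pos mult_nonneg_nonpos2)
  ultimately show ?thesis by blast
qed

text \<open>The reflection \<open>I - c u u\<^sup>T\<close> with \<open>u = v - e\<^sub>0\<close> and \<open>c = 2 / \<parallel>u\<parallel>\<^sup>2\<close>; the sign condition
  keeps \<open>u\<close> away from zero.\<close>

lemma householder_reflection:
  fixes v :: "real vec"
  assumes v: "v \<in> carrier_vec n" and n: "0 < n" and vv: "v \<bullet> v = 1" and v0: "v $ 0 \<le> 0"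
  shows "\<exists>H. H \<in> carrier_mat n n \<and> H\<^sup>T = H \<and> H * H = 1\<^sub>m n \<and> H *\<^sub>v unit_vec n 0 = v"
proof -
  define u where "u j = v $ j - (if j = 0 then 1 else 0)" for j
  define s where "s = (\<Sum>j<n. u j * u j)"
  have vv': "(\<Sum>j<n. v $ j * v $ j) = 1" using vv v by (simp add: scalar_prod_def lessThan_atLeast0)
  have "s = (\<Sum>j<n. v $ j * v $ j - 2 * (if j = 0 then v $ j else 0) + (if j = 0 then 1 else 0))"
    unfolding s_def u_def by (intro sum.cong refl) (auto simp: algebra_simps)
  also have "\<dots> = 2 - 2 * v $ 0"
    using n by (simp add: sum.distrib sum_subtractf vv' sum_distrib_left[symmetric])
  finally have s: "s = 2 - 2 * v $ 0" .
  define c where "c = 2 / s"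
  have cs: "c * s = 2" and cu0: "c * u 0 = -1"
    using s v0 unfolding c_def u_def by (auto simp: field_simps)
  define H where "H = mat n n (\<lambda>(i, j). (if i = j then 1 else 0) - c * u i * u j)"
  have H: "H \<in> carrier_mat n n" unfolding H_def by simp
  have HT: "H\<^sup>T = H" unfolding H_def by (intro eq_matI) (auto simp: mult_ac)
  have HH: "H * H = 1\<^sub>m n"
  proof (intro eq_matI)
    fix i k assume "i < dim_row (1\<^sub>m n)" and "k < dim_col (1\<^sub>m n)"
    then have i: "i < n" and k: "k < n" by auto
    have "(H * H) $$ (i, k) = (\<Sum>j<n. ((if i = j then 1 else 0) - c * u i * u j)
                                      * ((if j = k then 1 else 0) - c * u j * u k))"
      using i k unfolding H_def by (simp add: scalar_prod_def lessThan_atLeast0 row_def col_def)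
    also have "\<dots> = (\<Sum>j<n. (if i = j then (if j = k then 1 else 0) - c * u j * u k else 0))
       - (\<Sum>j<n. if j = k then c * u i * u j else 0) + c * c * u i * u k * s"
      unfolding s_def sum_distrib_left sum_subtractf[symmetric] sum.distrib[symmetric]
      by (intro sum.cong refl) (auto simp: algebra_simps)
    also have "\<dots> = (if i = k then 1 else 0) - c * u i * u k - c * u i * u k + c * c * u i * u k * s"
      using i k by simp
    also have "\<dots> = (if i = k then 1 else 0)" using cs by (simp add: algebra_simps)
    finally show "(H * H) $$ (i, k) = 1\<^sub>m n $$ (i, k)" using i k by simp
  qed (use H in auto)
  have "H *\<^sub>v unit_vec n 0 = v"
  proof (intro eq_vecI)
    fix i assume "i < dim_vec v"
    then have i: "i < n" using v by simp
    have "(H *\<^sub>v unit_vec n 0) $ i = H $$ (i, 0)" using i n H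
      by (simp add: scalar_prod_right_unit row_def)
    also have "\<dots> = (if i = 0 then 1 else 0) - (c * u 0) * u i" unfolding H_def using i n by simp
    also have "\<dots> = v $ i" using cu0 unfolding u_def by simp
    finally show "(H *\<^sub>v unit_vec n 0) $ i = v $ i" .
  qed (use v H in auto)
  with H HT HH show ?thesis by blast
qed

lemma orthogonal_involution_scalar_prod:
  fixes H :: "real mat"
  assumes H: "H \<in> carrier_mat n n" and HT: "H\<^sup>T = H" and HH: "H * H = 1\<^sub>m n"
    and x: "x \<in> carrier_vec n" and y: "y \<in> carrier_vec n"
  shows "(H *\<^sub>v x) \<bullet> (H *\<^sub>v y) = x \<bullet> y"
proof -
  have "(H *\<^sub>v x) \<bullet> (H *\<^sub>v y) = (H\<^sup>T *\<^sub>v (H *\<^sub>v x)) \<bullet> y"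
    using transpose_vec_mult_scalar[OF H y, of "H *\<^sub>v x"] H x by simp
  also have "H\<^sup>T *\<^sub>v (H *\<^sub>v x) = x" unfolding HT
    using assoc_mult_mat_vec[OF H H x, symmetric] HH x by simp
  finally show ?thesis .
qed

lemma orthonormal_eigenbasis_conjugate:
  fixes A H :: "real mat"
  assumes A: "A \<in> carrier_mat n n"
    and H: "H \<in> carrier_mat n n" and HT: "H\<^sup>T = H" and HH: "H * H = 1\<^sub>m n"
    and basis: "orthonormal_eigenbasis (H * A * H) n d b"
  shows "orthonormal_eigenbasis A n d (\<lambda>i. H *\<^sub>v b i)"
proof -
  have b: "b i \<in> carrier_vec n" and Hb: "H * A * H *\<^sub>v b i = d i \<cdot>\<^sub>v b i" if "i < n" for i
    using basis that unfolding orthonormal_eigenbasis_def by auto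
  have HAH: "H * (H * A * H) = A * H"
    using H A HH by (metis assoc_mult_mat left_mult_one_mat mult_carrier_mat)
  have "A *\<^sub>v (H *\<^sub>v b i) = d i \<cdot>\<^sub>v (H *\<^sub>v b i)" if i: "i < n" for i
  proof -
    have "A *\<^sub>v (H *\<^sub>v b i) = (A * H) *\<^sub>v b i" using A H b[OF i] by (simp add: assoc_mult_mat_vec)
    also have "\<dots> = H *\<^sub>v (H * A * H *\<^sub>v b i)"
      unfolding HAH[symmetric] using H A by (intro assoc_mult_mat_vec[OF H _ b[OF i]]) auto
    also have "\<dots> = d i \<cdot>\<^sub>v (H *\<^sub>v b i)" unfolding Hb[OF i] using H b[OF i] by (simp add: mult_mat_vec)
    finally show ?thesis .
  qed
  moreover have "(H *\<^sub>v b i) \<bullet> (H *\<^sub>v b j) = b i \<bullet> b j" if "i < n" "j < n" for i j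
    using orthogonal_involution_scalar_prod[OF H HT HH b b] that by simp
  ultimately show ?thesis using basis H b unfolding orthonormal_eigenbasis_def by auto
qed

lemma symmetric_mat_first_row:
  fixes A :: "real mat"
  assumes A: "A \<in> carrier_mat n n" and sym: "A\<^sup>T = A" and j: "j < n"
    and e: "A *\<^sub>v unit_vec n 0 = l \<cdot>\<^sub>v unit_vec n 0"
  shows "A $$ (0, j) = (if j = 0 then l else 0)"
proof -
  have "A $$ (j, 0) = (A *\<^sub>v unit_vec n 0) $ j"
    using j A by (simp add: scalar_prod_right_unit row_def)
  then have "A $$ (j, 0) = (if j = 0 then l else 0)" using e j by auto
  then show ?thesis using symmetric_matD[OF A sym, of 0 j] j by simp
qed

text \<open>Deflation: if \<open>e\<^sub>0\<close> is an eigenvector of a symmetric \<open>A\<close>, then \<open>A\<close> is block diagonal, and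
  an eigenbasis of the lower block, shifted down by one coordinate, completes \<open>e\<^sub>0\<close>.\<close>

lemma orthonormal_eigenbasis_deflation:
  fixes A :: "real mat"
  assumes A: "A \<in> carrier_mat (Suc m) (Suc m)" and sym: "A\<^sup>T = A"
    and e: "A *\<^sub>v unit_vec (Suc m) 0 = l \<cdot>\<^sub>v unit_vec (Suc m) 0"
    and basis: "orthonormal_eigenbasis (mat m m (\<lambda>(i, j). A $$ (Suc i, Suc j))) m d q"
  shows "\<exists>d' p. orthonormal_eigenbasis A (Suc m) d' p"
proof -
  let ?B = "mat m m (\<lambda>(i, j). A $$ (Suc i, Suc j))"
  define e0 where "e0 = (unit_vec (Suc m) 0 :: real vec)"
  define qt where "qt i = vec (Suc m) (\<lambda>k. if k = 0 then 0 else q i $ (k - 1))" for i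
  have q: "q i \<in> carrier_vec m" and Bq: "?B *\<^sub>v q i = d i \<cdot>\<^sub>v q i" if "i < m" for i
    using basis that unfolding orthonormal_eigenbasis_def by auto
  have Aqt: "A *\<^sub>v qt i = d i \<cdot>\<^sub>v qt i" if i: "i < m" for i
  proof (intro eq_vecI)
    fix k assume "k < dim_vec (d i \<cdot>\<^sub>v qt i)"
    then have k: "k < Suc m" unfolding qt_def by simp
    have "(A *\<^sub>v qt i) $ k = (\<Sum>t<Suc m. A $$ (k, t) * qt i $ t)" using k A
      by (simp add: scalar_prod_def lessThan_atLeast0 qt_def row_def)
    also have "\<dots> = (\<Sum>t<m. A $$ (k, Suc t) * q i $ t)"
      unfolding sum.lessThan_Suc_shift by (simp add: qt_def)
    also have "\<dots> = (d i \<cdot>\<^sub>v qt i) $ k"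
    proof (cases k)
      case 0
      then show ?thesis using symmetric_mat_first_row[OF A sym _ e] by (simp add: qt_def)
    next
      case (Suc k')
      then have k': "k' < m" using k by simp
      have "(?B *\<^sub>v q i) $ k' = (\<Sum>t<m. A $$ (k, Suc t) * q i $ t)"
        using k' q[OF i] Suc by (simp add: scalar_prod_def lessThan_atLeast0 row_def)
      then show ?thesis using Bq[OF i] q[OF i] k' Suc by (simp add: qt_def)
    qed
    finally show "(A *\<^sub>v qt i) $ k = (d i \<cdot>\<^sub>v qt i) $ k" .
  qed (use A in \<open>simp add: qt_def\<close>)
  have qtq: "qt i \<bullet> qt j = q i \<bullet> q j" if "i < m" "j < m" for i j
  proof -
    have "qt i \<bullet> qt j = (\<Sum>t<Suc m. qt i $ t * qt j $ t)"
      by (simp add: scalar_prod_def lessThan_atLeast0 qt_def)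
    also have "\<dots> = (\<Sum>t<m. q i $ t * q j $ t)"
      unfolding sum.lessThan_Suc_shift by (simp add: qt_def)
    also have "\<dots> = q i \<bullet> q j" using q[OF that(2)] by (simp add: scalar_prod_def lessThan_atLeast0)
    finally show ?thesis .
  qed
  have e0qt: "e0 \<bullet> qt i = 0" and qte0: "qt i \<bullet> e0 = 0" for i
    unfolding e0_def qt_def by (simp_all add: scalar_prod_left_unit scalar_prod_right_unit)
  define p where "p i = (if i = 0 then e0 else qt (i - 1))" for i
  define d' where "d' i = (if i = 0 then l else d (i - 1))" for i
  have "orthonormal_eigenbasis A (Suc m) d' p"
    unfolding orthonormal_eigenbasis_def
  proof (intro conjI allI impI)
    fix i j assume i: "i < Suc m"
    show "p i \<in> carrier_vec (Suc m)" unfolding p_def qt_def e0_def by auto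
    show "A *\<^sub>v p i = d' i \<cdot>\<^sub>v p i"
      using e Aqt[of "i - 1"] i unfolding p_def d'_def e0_def by auto
    assume "j < Suc m"
    then show "p i \<bullet> p j = (if i = j then 1 else 0)"
      using i qtq basis e0qt qte0 unfolding p_def orthonormal_eigenbasis_def e0_def by auto
  qed
  then show ?thesis by blast
qed

theorem real_symmetric_mat_orthonormal_eigenbasis:
  fixes A :: "real mat"
  assumes "A \<in> carrier_mat n n" and "A\<^sup>T = A"
  shows "\<exists>d p. orthonormal_eigenbasis A n d p"
  using assms
proof (induction n arbitrary: A)
  case 0
  then show ?case by (auto simp: orthonormal_eigenbasis_def)
next
  case (Suc m)
  note A = Suc.prems(1) and sym = Suc.prems(2)
  obtain l v0 where v0: "v0 \<in> carrier_vec (Suc m)" "v0 \<noteq> 0\<^sub>v (Suc m)" "A *\<^sub>v v0 = l \<cdot>\<^sub>v v0"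
    using real_symmetric_mat_has_eigenvector[OF A sym] by blast
  obtain k where vv: "(k \<cdot>\<^sub>v v0) \<bullet> (k \<cdot>\<^sub>v v0) = 1" and v_head: "(k \<cdot>\<^sub>v v0) $ 0 \<le> 0"
    using unit_multiple_with_nonpos_head[OF v0(1,2)] by blast
  define v where "v = k \<cdot>\<^sub>v v0"
  have v: "v \<in> carrier_vec (Suc m)" and Av: "A *\<^sub>v v = l \<cdot>\<^sub>v v"
    unfolding v_def using A v0 by (auto simp: mult_mat_vec smult_smult_assoc mult.commute)
  obtain H where H: "H \<in> carrier_mat (Suc m) (Suc m)" and HT: "H\<^sup>T = H"
    and HH: "H * H = 1\<^sub>m (Suc m)" and He: "H *\<^sub>v unit_vec (Suc m) 0 = v"
    using householder_reflection[OF v _ vv[folded v_def] v_head[folded v_def]] by auto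
  define A' where "A' = H * A * H"
  have A': "A' \<in> carrier_mat (Suc m) (Suc m)" unfolding A'_def using H A by auto
  have A'T: "A'\<^sup>T = A'"
  proof -
    have "(H * A * H)\<^sup>T = H\<^sup>T * (H * A)\<^sup>T" using H A by (intro transpose_mult) auto
    also have "(H * A)\<^sup>T = A\<^sup>T * H\<^sup>T" using H A by (intro transpose_mult) auto
    finally show ?thesis unfolding A'_def HT sym by (simp add: assoc_mult_mat[OF H A H])
  qed
  have Hv: "H *\<^sub>v v = unit_vec (Suc m) 0"
    using He[symmetric] HH H by (metis assoc_mult_mat_vec one_mult_mat_vec unit_vec_carrier)
  have "A' *\<^sub>v unit_vec (Suc m) 0 = l \<cdot>\<^sub>v unit_vec (Suc m) 0"
    unfolding A'_def using H A He Av Hv v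
    by (simp add: assoc_mult_mat_vec[of _ "Suc m" "Suc m" _ "Suc m"] mult_mat_vec[of _ "Suc m" "Suc m"])
  moreover have "(mat m m (\<lambda>(i, j). A' $$ (Suc i, Suc j)))\<^sup>T = mat m m (\<lambda>(i, j). A' $$ (Suc i, Suc j))"
    using symmetric_matD[OF A' A'T] by (intro eq_matI) auto
  then obtain d q where "orthonormal_eigenbasis (mat m m (\<lambda>(i, j). A' $$ (Suc i, Suc j))) m d q"
    using Suc.IH by fastforce
  ultimately obtain d' b where "orthonormal_eigenbasis A' (Suc m) d' b"
    using orthonormal_eigenbasis_deflation[OF A' A'T] by blast
  then show ?case
    using orthonormal_eigenbasis_conjugate[OF A H HT HH] unfolding A'_def by blast
qed

section \<open>Counting eigenvalues\<close>

lemma char_poly_orthonormal_eigenbasis: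
  fixes A :: "real mat"
  assumes A: "A \<in> carrier_mat n n" and basis: "orthonormal_eigenbasis A n d p"
  shows "char_poly A = (\<Prod>i<n. [:-d i, 1:])"
proof -
  have ev: "p i \<in> carrier_vec n" "A *\<^sub>v p i = d i \<cdot>\<^sub>v p i" if "i < n" for i
    using basis that unfolding orthonormal_eigenbasis_def by auto
  define P where "P = mat n n (\<lambda>(i, j). p j $ i)"
  define D where "D = mat n n (\<lambda>(i, j). if i = j then d i else (0::real))"
  have P: "P \<in> carrier_mat n n" and PT: "P\<^sup>T \<in> carrier_mat n n" and D: "D \<in> carrier_mat n n"
    unfolding P_def D_def by auto
  have colP: "col P j = p j" if "j < n" for j
    using that ev(1)[OF that] unfolding P_def by (auto simp: col_mat intro!: eq_vecI)
  have PTP: "P\<^sup>T * P = 1\<^sub>m n"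
  proof (intro eq_matI)
    fix i j assume "i < dim_row (1\<^sub>m n)" "j < dim_col (1\<^sub>m n)"
    then have ij: "i < n" "j < n" by auto
    have "(P\<^sup>T * P) $$ (i, j) = p i \<bullet> p j" using ij colP[of i] colP[of j] P
      by (simp add: row_transpose)
    then show "(P\<^sup>T * P) $$ (i, j) = 1\<^sub>m n $$ (i, j)"
      using basis ij unfolding orthonormal_eigenbasis_def by simp
  qed (use P in auto)
  have PPT: "P * P\<^sup>T = 1\<^sub>m n" using mat_mult_left_right_inverse[OF PT P PTP] .
  have AP: "A * P = P * D"
  proof (intro eq_matI)
    fix i j assume "i < dim_row (P * D)" "j < dim_col (P * D)"
    then have ij: "i < n" "j < n" using P D by auto
    have "(A * P) $$ (i, j) = (A *\<^sub>v p j) $ i" using ij A P colP[of j] by simp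
    also have "\<dots> = d j * p j $ i" using ev[OF ij(2)] ij(1) by simp
    also have "\<dots> = (P * D) $$ (i, j)"
    proof -
      have "(P * D) $$ (i, j) = (\<Sum>k = 0..<n. p k $ i * (if k = j then d k else 0))"
        using ij unfolding P_def D_def by (auto simp: scalar_prod_def intro!: sum.cong)
      also have "\<dots> = (\<Sum>k = 0..<n. (if k = j then p j $ i * d j else 0))"
        by (intro sum.cong) auto
      finally show ?thesis using ij by (simp add: mult.commute)
    qed
    finally show "(A * P) $$ (i, j) = (P * D) $$ (i, j)" .
  qed (use A P D in auto)
  have "A = A * (P * P\<^sup>T)" using A PPT by simp
  also have "\<dots> = P * D * P\<^sup>T" using A P PT D AP by (metis assoc_mult_mat)
  finally have "similar_mat_wit A D P P\<^sup>T"
    unfolding similar_mat_wit_def Let_def using A P PT D PPT PTP by auto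
  then have "similar_mat A D" unfolding similar_mat_def by blast
  then have "char_poly A = char_poly D" by (rule char_poly_similar)
  also have "\<dots> = (\<Prod>a\<leftarrow>diag_mat D. [:- a, 1:])"
    by (rule char_poly_upper_triangular[OF D]) (auto simp: upper_triangular_def D_def)
  also have "diag_mat D = map d [0..<n]" unfolding diag_mat_def D_def by auto
  finally show ?thesis
    by (simp add: prod.distinct_set_conv_list[symmetric] atLeast0LessThan comp_def)
qed

lemma order_prod_linear_factors:
  fixes d :: "nat \<Rightarrow> 'a :: idom"
  assumes "finite I"
  shows "order a (\<Prod>i\<in>I. [:-d i, 1:]) = card {i\<in>I. d i = a}"
  using assms
proof (induction I rule: finite_induct)
  case empty
  then show ?case by (simp add: order_0I)
next
  case (insert x F)
  have "(\<Prod>i\<in>F. [:-d i, 1:]) \<noteq> 0" using insert by (simp add: prod_zero_iff)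
  then have "[:-d x, 1:] * (\<Prod>i\<in>F. [:-d i, 1:]) \<noteq> 0" by (simp del: mult_pCons_left)
  then have "order a (\<Prod>i\<in>insert x F. [:-d i, 1:])
      = order a [:-d x, 1:] + order a (\<Prod>i\<in>F. [:-d i, 1:])"
    using insert by (simp add: order_mult del: mult_pCons_left)
  also have "\<dots> = (if d x = a then 1 else 0) + card {i\<in>F. d i = a}"
    using insert by (simp add: order_linear')
  also have "\<dots> = card {i\<in>insert x F. d i = a}"
  proof -
    have "{i\<in>insert x F. d i = a} = (if d x = a then insert x {i\<in>F. d i = a} else {i\<in>F. d i = a})"
      by auto
    then show ?thesis using insert by auto
  qed
  finally show ?case .
qed

lemma
  fixes A :: "real mat"
  assumes A: "A \<in> carrier_mat n n" and cp: "char_poly A = (\<Prod>i<n. [:-d i, 1:])"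
  shows eig_count_split_char_poly: "eig_count A I = card {i. i < n \<and> d i \<in> I}"
    and eigenvalues_split_char_poly: "{a. eigenvalue A a} = d ` {..<n}"
proof -
  have evs: "eigenvalue A a \<longleftrightarrow> (\<exists>i<n. d i = a)" for a
    unfolding eigenvalue_root_char_poly[OF A] cp poly_prod by (auto simp: prod_zero_iff)
  then show "{a. eigenvalue A a} = d ` {..<n}" by auto
  have "{a. eigenvalue A a \<and> a \<in> I} \<subseteq> d ` {..<n}" using evs by auto
  then have fin: "finite {a. eigenvalue A a \<and> a \<in> I}" by (rule finite_subset) simp
  have "{i. i < n \<and> d i \<in> I} = (\<Union>a\<in>{a. eigenvalue A a \<and> a \<in> I}. {i. i < n \<and> d i = a})"
    using evs by auto
  then have "card {i. i < n \<and> d i \<in> I}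
      = (\<Sum>a\<in>{a. eigenvalue A a \<and> a \<in> I}. card {i. i < n \<and> d i = a})"
    using fin by (simp only:) (rule card_UN_disjoint, auto)
  also have "\<dots> = eig_count A I" unfolding eig_count_def cp
  proof (intro sum.cong refl)
    fix a
    have "{i\<in>{..<n}. d i = a} = {i. i < n \<and> d i = a}" by auto
    then show "card {i. i < n \<and> d i = a} = order a (\<Prod>i<n. [:- d i, 1:])"
      using order_prod_linear_factors[of "{..<n}" a d] by simp
  qed
  finally show "eig_count A I = card {i. i < n \<and> d i \<in> I}" by simp
qed

text \<open>Gaussian elimination on the first equation: solve it for the unknown \<open>x j\<^sub>0\<close> and recurse
  on the remaining equations with the other unknowns.\<close>

lemma homogeneous_system_nontrivial_solution:
  fixes a :: "'e \<Rightarrow> 'j \<Rightarrow> 'a :: field"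
  assumes "finite E" "finite J" "card E < card J"
  shows "\<exists>x. (\<exists>j\<in>J. x j \<noteq> 0) \<and> (\<forall>e\<in>E. (\<Sum>j\<in>J. a e j * x j) = 0)"
  using assms
proof (induction E arbitrary: J a rule: finite_induct)
  case empty
  then obtain j where "j \<in> J" by (metis card.empty equals0I less_irrefl)
  then show ?case by (intro exI[of _ "\<lambda>_. 1"]) auto
next
  case (insert e E)
  show ?case
  proof (cases "\<forall>j\<in>J. a e j = 0")
    case True
    have "card E < card J" using insert by simp
    then obtain x where "\<exists>j\<in>J. x j \<noteq> 0" "\<forall>e\<in>E. (\<Sum>j\<in>J. a e j * x j) = 0"
      using insert.IH[OF insert.prems(1)] by blast
    with True show ?thesis by (intro exI[of _ x]) auto
  next
    case False
    then obtain j0 where j0: "j0 \<in> J" "a e j0 \<noteq> 0" by blast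
    define J' where "J' = J - {j0}"
    have "finite J'" "card E < card J'" unfolding J'_def using insert j0 by auto
    then obtain y where y: "\<exists>j\<in>J'. y j \<noteq> 0"
      "\<forall>e'\<in>E. (\<Sum>j\<in>J'. (a e' j - a e' j0 * a e j / a e j0) * y j) = 0"
      using insert.IH[of J' "\<lambda>e' j. a e' j - a e' j0 * a e j / a e j0"] by blast
    define s where "s = (\<Sum>j\<in>J'. a e j * y j)"
    define x where "x = y(j0 := - s / a e j0)"
    have split: "(\<Sum>j\<in>J. g j * x j) = g j0 * x j0 + (\<Sum>j\<in>J'. g j * y j)" for g
    proof -
      have "(\<Sum>j\<in>J. g j * x j) = g j0 * x j0 + (\<Sum>j\<in>J'. g j * x j)"
        unfolding J'_def using j0 insert by (simp add: sum.remove)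
      also have "(\<Sum>j\<in>J'. g j * x j) = (\<Sum>j\<in>J'. g j * y j)"
        unfolding x_def J'_def by (intro sum.cong) auto
      finally show ?thesis .
    qed
    have "\<exists>j\<in>J. x j \<noteq> 0" using y(1) unfolding x_def J'_def by auto
    moreover have "(\<Sum>j\<in>J. a e j * x j) = 0"
      unfolding split using j0 unfolding x_def s_def by simp
    moreover have "(\<Sum>j\<in>J. a e' j * x j) = 0" if e': "e' \<in> E" for e'
    proof -
      have "0 = (\<Sum>j\<in>J'. (a e' j - a e' j0 * a e j / a e j0) * y j)" using y(2) e' by simp
      also have "\<dots> = (\<Sum>j\<in>J'. a e' j * y j) - a e' j0 / a e j0 * s"
        unfolding s_def sum_distrib_left sum_subtractf[symmetric]
        by (intro sum.cong refl) (simp add: algebra_simps)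
      finally show ?thesis unfolding split by (simp add: x_def)
    qed
    ultimately show ?thesis by blast
  qed
qed

lemma orthonormal_eigenbasis_coordinates:
  fixes A :: "real mat"
  assumes A: "A \<in> carrier_mat n n" and basis: "orthonormal_eigenbasis A n d p"
    and i: "i < n" and j: "j < n"
  shows "(\<Sum>u<n. p i $ u * p j $ u) = (if i = j then 1 else 0)"
    and "(\<Sum>v<n. A $$ (j, v) * p i $ v) = d i * p i $ j"
proof -
  have pi: "p i \<in> carrier_vec n" and pj: "dim_vec (p j) = n" and Ap: "A *\<^sub>v p i = d i \<cdot>\<^sub>v p i"
    using basis i j unfolding orthonormal_eigenbasis_def by auto
  have "p i \<bullet> p j = (if i = j then 1 else 0)"
    using basis i j unfolding orthonormal_eigenbasis_def by auto
  then show "(\<Sum>u<n. p i $ u * p j $ u) = (if i = j then 1 else 0)"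
    unfolding scalar_prod_def pj lessThan_atLeast0 .
  have "(A *\<^sub>v p i) $ j = (\<Sum>v<n. A $$ (j, v) * p i $ v)"
    using A pi j by (auto simp: scalar_prod_def lessThan_atLeast0 row_def)
  then show "(\<Sum>v<n. A $$ (j, v) * p i $ v) = d i * p i $ j" using Ap pi j by simp
qed

lemma quadratic_form_eigenbasis_combination:
  fixes A :: "real mat" and a :: "nat \<Rightarrow> real"
  assumes A: "A \<in> carrier_mat n n" and basis: "orthonormal_eigenbasis A n d p"
    and J: "J \<subseteq> {..<n}"
  defines "f \<equiv> \<lambda>u. \<Sum>j\<in>J. a j * p j $ u"
  shows "(\<Sum>u<n. (f u)\<^sup>2) = (\<Sum>j\<in>J. (a j)\<^sup>2)"
    and "(\<Sum>u<n. f u * (\<Sum>v<n. A $$ (u, v) * f v)) = (\<Sum>j\<in>J. (a j)\<^sup>2 * d j)"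
proof -
  note coord = orthonormal_eigenbasis_coordinates[OF A basis]
  have fin: "finite J" using J finite_subset by blast
  have Jn: "j < n" if "j \<in> J" for j using J that by auto
  have inner: "(\<Sum>u<n. f u * (\<Sum>j\<in>J. b j * p j $ u)) = (\<Sum>j\<in>J. a j * b j)" for b
  proof -
    have "(\<Sum>u<n. f u * (\<Sum>j\<in>J. b j * p j $ u))
        = (\<Sum>u<n. \<Sum>i\<in>J. \<Sum>j\<in>J. a i * b j * (p i $ u * p j $ u))"
      unfolding f_def by (intro sum.cong refl) (simp add: sum_product mult_ac)
    also have "\<dots> = (\<Sum>i\<in>J. \<Sum>u<n. \<Sum>j\<in>J. a i * b j * (p i $ u * p j $ u))"
      by (rule sum.swap)
    also have "\<dots> = (\<Sum>i\<in>J. \<Sum>j\<in>J. a i * b j * (\<Sum>u<n. p i $ u * p j $ u))"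
      by (rule sum.cong[OF refl]) (subst sum.swap, simp add: sum_distrib_left)
    also have "\<dots> = (\<Sum>i\<in>J. \<Sum>j\<in>J. if i = j then a i * b i else 0)"
      by (intro sum.cong refl) (simp add: coord(1) Jn)
    finally show ?thesis using fin by simp
  qed
  show "(\<Sum>u<n. (f u)\<^sup>2) = (\<Sum>j\<in>J. (a j)\<^sup>2)"
    using inner[of a] unfolding f_def by (simp add: power2_eq_square)
  have "(\<Sum>v<n. A $$ (u, v) * f v) = (\<Sum>j\<in>J. (a j * d j) * p j $ u)" if "u < n" for u
  proof -
    have "(\<Sum>v<n. A $$ (u, v) * f v) = (\<Sum>j\<in>J. a j * (\<Sum>v<n. A $$ (u, v) * p j $ v))"
      unfolding f_def sum_distrib_left by (subst sum.swap) (simp add: mult_ac)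
    also have "\<dots> = (\<Sum>j\<in>J. (a j * d j) * p j $ u)"
      using that by (intro sum.cong refl) (simp add: coord(2) Jn)
    finally show ?thesis .
  qed
  then have "(\<Sum>u<n. f u * (\<Sum>v<n. A $$ (u, v) * f v))
      = (\<Sum>u<n. f u * (\<Sum>j\<in>J. (a j * d j) * p j $ u))" by simp
  also have "\<dots> = (\<Sum>j\<in>J. (a j)\<^sup>2 * d j)" unfolding inner by (simp add: power2_eq_square mult_ac)
  finally show "(\<Sum>u<n. f u * (\<Sum>v<n. A $$ (u, v) * f v)) = (\<Sum>j\<in>J. (a j)\<^sup>2 * d j)" .
qed

text \<open>The easy half of the min-max principle.\<close>

lemma card_eigenvalues_below_le:
  fixes A :: "real mat"
  assumes A: "A \<in> carrier_mat n n" and basis: "orthonormal_eigenbasis A n d p"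
    and S: "finite S"
    and bound: "\<And>f. (\<And>s. s \<in> S \<Longrightarrow> f s = 0) \<Longrightarrow>
      c * (\<Sum>u<n. (f u)\<^sup>2) \<le> (\<Sum>u<n. f u * (\<Sum>v<n. A $$ (u, v) * f v))"
  shows "card {i. i < n \<and> d i < c} \<le> card S"
proof -
  define J where "J = {i. i < n \<and> d i < c}"
  have J: "J \<subseteq> {..<n}" unfolding J_def by auto
  then have fin: "finite J" using finite_subset by blast
  have "\<not> card S < card J"
  proof
    assume "card S < card J"
    then obtain a where a: "\<exists>j\<in>J. a j \<noteq> 0" "\<forall>s\<in>S. (\<Sum>j\<in>J. p j $ s * a j) = 0"
      using homogeneous_system_nontrivial_solution[OF S fin, of "\<lambda>s j. p j $ s"] by blast
    have "(\<Sum>j\<in>J. (a j)\<^sup>2 * d j) < (\<Sum>j\<in>J. (a j)\<^sup>2 * c)"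
    proof (rule sum_strict_mono_ex1[OF fin])
      show "\<forall>j\<in>J. (a j)\<^sup>2 * d j \<le> (a j)\<^sup>2 * c"
        unfolding J_def by (auto intro: mult_left_mono)
      from a(1) obtain j where "j \<in> J" "a j \<noteq> 0" by blast
      then show "\<exists>j\<in>J. (a j)\<^sup>2 * d j < (a j)\<^sup>2 * c"
        unfolding J_def by (auto intro: mult_strict_left_mono)
    qed
    also have "\<dots> = c * (\<Sum>j\<in>J. (a j)\<^sup>2)" by (simp add: sum_distrib_left mult.commute)
    finally have "(\<Sum>j\<in>J. (a j)\<^sup>2 * d j) < c * (\<Sum>j\<in>J. (a j)\<^sup>2)" .
    moreover have "c * (\<Sum>u<n. (\<Sum>j\<in>J. a j * p j $ u)\<^sup>2)
        \<le> (\<Sum>u<n. (\<Sum>j\<in>J. a j * p j $ u) * (\<Sum>v<n. A $$ (u, v) * (\<Sum>j\<in>J. a j * p j $ v)))"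
      using a(2) by (intro bound) (simp add: mult.commute)
    ultimately show False
      unfolding quadratic_form_eigenbasis_combination[OF A basis J] by linarith
  qed
  then show ?thesis unfolding J_def by simp
qed

section \<open>The weighted Laplacian\<close>

lemma laplacian_carrier: "laplacian N w \<in> carrier_mat N N"
  by (simp add: laplacian_def)

lemma laplacian_symmetric:
  assumes "weighted_graph N w"
  shows "(laplacian N w)\<^sup>T = laplacian N w"
  using assms unfolding weighted_graph_def laplacian_def by (intro eq_matI) auto

lemma laplacian_apply:
  assumes u: "u < N"
  shows "(\<Sum>v<N. laplacian N w $$ (u, v) * f v) = (\<Sum>v<N. w u v * (f u - f v))"
proof -
  have "(\<Sum>v<N. laplacian N w $$ (u, v) * f v)
      = (\<Sum>v<N. (if u = v then (\<Sum>t<N. w u t) * f v else 0) - w u v * f v)"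
    using u by (intro sum.cong refl) (auto simp: laplacian_def algebra_simps)
  also have "\<dots> = (\<Sum>t<N. w u t) * f u - (\<Sum>v<N. w u v * f v)"
    using u by (simp add: sum_subtractf)
  also have "\<dots> = (\<Sum>v<N. w u v * (f u - f v))"
    by (simp add: sum_distrib_left sum_distrib_right sum_subtractf algebra_simps)
  finally show ?thesis .
qed

lemma laplacian_quadratic_form:
  assumes "weighted_graph N w"
  shows "2 * (\<Sum>u<N. f u * (\<Sum>v<N. laplacian N w $$ (u, v) * f v))
    = (\<Sum>u<N. \<Sum>v<N. w u v * (f u - f v)\<^sup>2)"
proof -
  define R where "R = (\<Sum>u<N. \<Sum>v<N. w u v * f u * (f u - f v))"
  have "(\<Sum>u<N. f u * (\<Sum>v<N. laplacian N w $$ (u, v) * f v))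
      = (\<Sum>u<N. f u * (\<Sum>v<N. w u v * (f u - f v)))"
    by (intro sum.cong refl) (simp add: laplacian_apply)
  then have form: "(\<Sum>u<N. f u * (\<Sum>v<N. laplacian N w $$ (u, v) * f v)) = R"
    unfolding R_def by (simp add: sum_distrib_left mult_ac)
  have "R = (\<Sum>v<N. \<Sum>u<N. w u v * f u * (f u - f v))" unfolding R_def by (rule sum.swap)
  also have "\<dots> = (\<Sum>u<N. \<Sum>v<N. w u v * f v * (f v - f u))"
    using assms unfolding weighted_graph_def by (intro sum.cong refl) simp
  finally have R_swap: "R = (\<Sum>u<N. \<Sum>v<N. w u v * f v * (f v - f u))" .
  have "2 * R = (\<Sum>u<N. \<Sum>v<N. w u v * f u * (f u - f v) + w u v * f v * (f v - f u))"
    unfolding mult_2 by (subst (2) R_swap) (simp add: R_def sum.distrib)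
  also have "\<dots> = (\<Sum>u<N. \<Sum>v<N. w u v * (f u - f v)\<^sup>2)"
    by (intro sum.cong refl) (simp add: power2_eq_square algebra_simps)
  finally show ?thesis unfolding form .
qed

lemma K0_le_boundary_weight:
  assumes "v \<in> bdry N w S0"
  shows "K0 N w S0 \<le> (\<Sum>u\<in>S0. w u v)"
proof -
  have "bdry N w S0 \<subseteq> {..<N}" unfolding bdry_def cl_def by auto
  then show ?thesis unfolding K0_def
    using assms by (intro cINF_lower bdd_below_finite) (auto intro: finite_subset)
qed

lemma laplacian_quadratic_form_ge_K0:
  assumes G: "weighted_graph N w" and S0: "S0 \<subseteq> {..<N}"
    and cover: "S0 \<union> bdry N w S0 = {..<N}" and f0: "\<And>s. s \<in> S0 \<Longrightarrow> f s = 0"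
  shows "K0 N w S0 / 2 * (\<Sum>u<N. (f u)\<^sup>2) \<le> (\<Sum>u<N. f u * (\<Sum>v<N. laplacian N w $$ (u, v) * f v))"
proof -
  define B where "B = {..<N} - S0"
  have B: "B = bdry N w S0" using cover unfolding B_def bdry_def by auto
  have wnn: "w u v \<ge> 0" if "u < N" "v < N" for u v
    using G that unfolding weighted_graph_def by auto
  have "K0 N w S0 * (\<Sum>u<N. (f u)\<^sup>2) = (\<Sum>v\<in>B. (f v)\<^sup>2 * K0 N w S0)"
  proof -
    have "(\<Sum>u<N. (f u)\<^sup>2) = (\<Sum>u\<in>B. (f u)\<^sup>2) + (\<Sum>u\<in>S0. (f u)\<^sup>2)"
      unfolding B_def using S0 by (simp add: sum.subset_diff[of S0 "{..<N}"])
    then show ?thesis using f0 by (simp add: sum_distrib_left mult_ac)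
  qed
  also have "\<dots> \<le> (\<Sum>v\<in>B. (f v)\<^sup>2 * (\<Sum>u\<in>S0. w u v))"
    using K0_le_boundary_weight unfolding B by (intro sum_mono mult_left_mono) auto
  also have "\<dots> = (\<Sum>u\<in>S0. \<Sum>v\<in>B. w u v * (f u - f v)\<^sup>2)"
    using f0 by (subst sum.swap) (simp add: sum_distrib_left sum_distrib_right mult_ac)
  also have "\<dots> \<le> (\<Sum>u\<in>S0. \<Sum>v<N. w u v * (f u - f v)\<^sup>2)"
    using S0 wnn unfolding B_def by (intro sum_mono sum_mono2) auto
  also have "\<dots> \<le> (\<Sum>u<N. \<Sum>v<N. w u v * (f u - f v)\<^sup>2)"
    using S0 wnn by (intro sum_mono2) (auto intro!: sum_nonneg)
  also have "\<dots> = 2 * (\<Sum>u<N. f u * (\<Sum>v<N. laplacian N w $$ (u, v) * f v))"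
    using laplacian_quadratic_form[OF G] by simp
  finally show ?thesis by simp
qed

theorem corollary3p4:
  fixes N :: nat and w :: "nat \<Rightarrow> nat \<Rightarrow> real" and S0 :: "nat set"
  assumes "0 < N"
    and "weighted_graph N w"
    and "graph_connected N w"
    and "S0 \<subseteq> {..<N}"
    and "S0 \<union> bdry N w S0 = {..<N}"
  shows "eig_count (laplacian N w) {0..<K0 N w S0 / 2} \<le> card S0
    \<and> eig_count (laplacian N w) {K0 N w S0 / 2 .. largest_eigenvalue (laplacian N w)}
        \<ge> N - card S0"
proof -
  let ?L = "laplacian N w" and ?c = "K0 N w S0 / 2"
  have L: "?L \<in> carrier_mat N N" by (rule laplacian_carrier)
  obtain d p where basis: "orthonormal_eigenbasis ?L N d p"
    using real_symmetric_mat_orthonormal_eigenbasis[OF L laplacian_symmetric[OF assms(2)]] by blast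
  have cp: "char_poly ?L = (\<Prod>i<N. [:-d i, 1:])"
    by (rule char_poly_orthonormal_eigenbasis[OF L basis])
  have below: "card {i. i < N \<and> d i < ?c} \<le> card S0"
    using card_eigenvalues_below_le[OF L basis finite_subset[OF assms(4) finite_lessThan]]
      laplacian_quadratic_form_ge_K0[OF assms(2,4,5)] by blast
  have "d i \<le> largest_eigenvalue ?L" if "i < N" for i
    unfolding largest_eigenvalue_def eigenvalues_split_char_poly[OF L cp] using that by auto
  then have "{i. i < N \<and> d i \<in> {?c..largest_eigenvalue ?L}} = {..<N} - {i. i < N \<and> d i < ?c}"
    by auto
  moreover have "card ({..<N} - {i. i < N \<and> d i < ?c}) = N - card {i. i < N \<and> d i < ?c}"
    by (subst card_Diff_subset) auto
  ultimately have "eig_count ?L {?c..largest_eigenvalue ?L} = N - card {i. i < N \<and> d i < ?c}"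
    by (simp add: eig_count_split_char_poly[OF L cp])
  moreover have "eig_count ?L {0..<?c} \<le> card {i. i < N \<and> d i < ?c}"
    unfolding eig_count_split_char_poly[OF L cp] by (intro card_mono) auto
  ultimately show ?thesis using below by linarith
qed

end
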